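(* Let $u$ be a 5-complex number with $0<\theta_+<\pi/2$ and $0<\psi_1<\pi/2$. Then $$u=\rho\exp\left\{\frac15(h_1+h_2+h_3+h_4)\ln\frac{\sqrt2}{\tan\theta_+}+\left[\frac{\sqrt5+1}{10}(h_1+h_4)-\frac{\sqrt5-1}{10}(h_2+h_3)\right]\ln\tan\psi_1+\tilde e_1\phi_1+\tilde e_2\phi_2\right\},$$ where the exponential of a 5-complex number $w$ is $\exp w=\sum_{n\ge0}w^n/n!$.
   Context: A 5-complex number is $u=x_0+h_1x_1+h_2x_2+h_3x_3+h_4x_4$ with real $x_j$, with componentwise addition and the commutative associative bilinear multiplication determined by $h_jh_k=h_{(j+k)\bmod 5}$, $h_0=1$. Canonical variables: $v_+=\sum_{j=0}^4x_j$ and, for $k=1,2$, $v_k=\sum_j x_j\cos(2\pi kj/5)$, $\tilde v_k=\sum_jx_j\sin(2\pi kj/5)$. For $k=1,2$: $\rho_k^2=v_k^2+\tilde v_k^2$ ($\rho_k\ge0$), $\phi_k\in[0,2\pi)$ with $\cos\phi_k=v_k/\rho_k$, $\sin\phi_k=\tilde v_k/\rho_k$. Planar angle $\psi_1\in[0,\pi/2]$: $\tan\psi_1=\rho_1/\rho_2$. Polar angle $\theta_+\in[0,\pi]$: $\tan\theta_+=\sqrt2\rho_1/v_+$. Amplitude $\rho=(v_+\rho_1^2\rho_2^2)^{1/5}$. Canonical basis elements (with $h_0=1$): $\tilde e_k=\frac25\sum_{j=0}^4\sin(2\pi kj/5)\,h_j$ for $k=1,2$. *)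

theory Defs
  imports "HOL-Analysis.Analysis" "HOL-Library.Numeral_Type"
begin

text \<open>5-complex numbers: u = x0 + h1 x1 + ... + h4 x4, represented as vectors in real^5,
  component j (index of_nat j :: 5) being x_j.  Indices of type 5 add modulo 5.\<close>

type_synonym tc5 = "real ^ 5"

definition hc5 :: "nat \<Rightarrow> tc5" where
  "hc5 j = (\<chi> i. if i = (of_nat j :: 5) then 1 else 0)"

definition xc5 :: "tc5 \<Rightarrow> nat \<Rightarrow> real" where
  "xc5 u j = u $ (of_nat j :: 5)"

text \<open>Bilinear multiplication with h_j h_k = h_{(j+k) mod 5}.\<close>
definition mult5 :: "tc5 \<Rightarrow> tc5 \<Rightarrow> tc5" where
  "mult5 u v = (\<chi> k. \<Sum>i\<in>UNIV. u $ i * v $ (k - i))"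

fun pow5 :: "tc5 \<Rightarrow> nat \<Rightarrow> tc5" where
  "pow5 w 0 = hc5 0"
| "pow5 w (Suc n) = mult5 w (pow5 w n)"

definition exp5 :: "tc5 \<Rightarrow> tc5" where
  "exp5 w = (\<Sum>n. (1 / fact n) *\<^sub>R pow5 w n)"

definition vplus :: "tc5 \<Rightarrow> real" where
  "vplus u = (\<Sum>j<5. xc5 u j)"

definition vk :: "nat \<Rightarrow> tc5 \<Rightarrow> real" where
  "vk k u = (\<Sum>j<5. xc5 u j * cos (2 * pi * real k * real j / 5))"

definition vtk :: "nat \<Rightarrow> tc5 \<Rightarrow> real" where
  "vtk k u = (\<Sum>j<5. xc5 u j * sin (2 * pi * real k * real j / 5))"

definition rhok :: "nat \<Rightarrow> tc5 \<Rightarrow> real" where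
  "rhok k u = sqrt ((vk k u)\<^sup>2 + (vtk k u)\<^sup>2)"

definition amp5 :: "tc5 \<Rightarrow> real" where
  "amp5 u = root 5 (vplus u * (rhok 1 u)\<^sup>2 * (rhok 2 u)\<^sup>2)"

definition etilde :: "nat \<Rightarrow> tc5" where
  "etilde k = (2/5) *\<^sub>R (\<Sum>j<5. sin (2 * pi * real k * real j / 5) *\<^sub>R hc5 j)"

end

theory Submission
  imports Defs
begin

text \<open>
  Substituting a fifth root of unity \<open>z\<close> for \<open>h\<^sub>1\<close>, i.e. \<open>z ^ j\<close> for \<open>h\<^sub>j\<close>, is an algebra
  homomorphism to the complex numbers that commutes with the exponential series. For
  \<open>\<omega> = cis (2 * pi / 5)\<close> it sends \<open>u\<close> to \<open>vplus u\<close> at \<open>z = 1\<close> and to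
  \<open>Complex (vk k u) (vtk k u)\<close> at \<open>z = \<omega> ^ k\<close>; its values at \<open>\<omega> ^ 3\<close> and \<open>\<omega> ^ 4\<close> are the
  conjugates of those at \<open>\<omega> ^ 2\<close> and \<open>\<omega>\<close>. Since the five values determine \<open>u\<close> (discrete
  Fourier inversion), it suffices to compare both sides at \<open>1, \<omega>, \<omega> ^ 2\<close>. Using
  \<open>\<omega> + \<omega> ^ 4 = (sqrt 5 - 1) / 2\<close>, the exponent takes the values \<open>(4 L + 2 M) / 5\<close>,
  \<open>(2 M - L) / 5 + i \<phi>\<^sub>1\<close> and \<open>(- 3 M - L) / 5 + i \<phi>\<^sub>2\<close> there, where \<open>L = ln (v\<^sub>+ / \<rho>\<^sub>1)\<close>
  and \<open>M = ln (\<rho>\<^sub>1 / \<rho>\<^sub>2)\<close>. As \<open>ln \<rho> = (ln v\<^sub>+ + 2 ln \<rho>\<^sub>1 + 2 ln \<rho>\<^sub>2) / 5\<close>, multiplying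
  their exponentials by \<open>\<rho>\<close> gives exactly \<open>v\<^sub>+\<close>, \<open>\<rho>\<^sub>1 cis \<phi>\<^sub>1\<close> and \<open>\<rho>\<^sub>2 cis \<phi>\<^sub>2\<close>.
\<close>

lemma exhaust_5:
  fixes x :: 5
  shows "x = 0 \<or> x = 1 \<or> x = 2 \<or> x = 3 \<or> x = 4"
proof (induct x)
  case (of_int z)
  then have "z = 0 \<or> z = 1 \<or> z = 2 \<or> z = 3 \<or> z = 4" by fastforce
  then show ?case by auto
qed

lemma UNIV_5: "UNIV = {0, 1, 2, 3, 4::5}"
  using exhaust_5 by auto

lemma sum_5: "sum f (UNIV::5 set) = f 0 + f 1 + f 2 + f 3 + f 4"
  unfolding UNIV_5 by (simp add: ac_simps)

lemma sum_lessThan_5: "(\<Sum>j<5::nat. f j) = f 0 + f 1 + f 2 + f 3 + f 4"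
  by (simp add: eval_nat_numeral ac_simps)

lemma numerals_mod_5:
  "(-1::5) = 4" "(-2::5) = 3" "(-3::5) = 2" "(-4::5) = 1" "(8::5) = 3" "(9::5) = 4"
  by simp_all

lemma tc5_eqI:
  fixes u v :: tc5
  assumes "\<And>j. j < 5 \<Longrightarrow> xc5 u j = xc5 v j"
  shows "u = v"
proof -
  have "u $ i = v $ i" for i
    using exhaust_5[of i] assms[of 0] assms[of 1] assms[of 2] assms[of 3] assms[of 4]
    by (auto simp: xc5_def)
  then show ?thesis by (simp add: vec_eq_iff)
qed

definition omega5 :: complex where
  "omega5 = cis (2 * pi / 5)"

lemma omega5_power: "omega5 ^ n = cis (2 * pi * real n / 5)"
  unfolding omega5_def Complex.DeMoivre by (simp add: mult.commute)

lemma omega5_power_eq_1_iff: "omega5 ^ n = 1 \<longleftrightarrow> 5 dvd n"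
proof -
  have "real n = 5 * of_int m \<longleftrightarrow> int n = 5 * m" for m :: int
    using of_int_eq_iff[of "int n" "5 * m", where 'a=real] by simp
  then have "omega5 ^ n = 1 \<longleftrightarrow> int 5 dvd int n"
    unfolding omega5_power cis_conv_exp exp_eq_1 dvd_def by (auto simp: field_simps)
  then show ?thesis by (simp only: of_nat_dvd_iff)
qed

lemma omega5_power_5 [simp]: "omega5 ^ 5 = 1"
  by (simp add: omega5_power_eq_1_iff)

lemma omega5_power_power_5: "(omega5 ^ k) ^ 5 = 1"
  by (simp add: omega5_power_eq_1_iff flip: power_mult)

lemma sum_omega5_powers: "(\<Sum>k<5::nat. (omega5 ^ n) ^ k) = (if 5 dvd n then 5 else 0)"
proof (cases "5 dvd n")
  case True
  then have "omega5 ^ n = 1" by (simp add: omega5_power_eq_1_iff)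
  with True show ?thesis by simp
next
  case False
  define x where "x = omega5 ^ n"
  have "x \<noteq> 1" using False by (simp add: x_def omega5_power_eq_1_iff)
  moreover have "x ^ 5 = 1"
    by (simp add: x_def omega5_power_power_5)
  ultimately have "(\<Sum>k<5::nat. x ^ k) = 0"
    unfolding sum_gp_strict by simp
  with False show ?thesis by (simp only: flip: x_def) simp
qed

lemma omega5_power_mod: "omega5 ^ n = omega5 ^ (n mod 5)"
proof -
  have "omega5 ^ n = (omega5 ^ 5) ^ (n div 5) * omega5 ^ (n mod 5)"
    by (simp only: power_mult [symmetric] power_add [symmetric] mult_div_mod_eq)
  then show ?thesis
    by simp
qed

lemma omega5_power_power: "(omega5 ^ k) ^ j = cis (2 * pi * real k * real j / 5)"
  unfolding power_mult [symmetric] unfolding omega5_power by (simp add: mult.assoc)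

lemma sum_omega5_power_1: "1 + omega5 + omega5 ^ 2 + omega5 ^ 3 + omega5 ^ 4 = 0"
  using sum_omega5_powers[of 1] by (simp add: sum_lessThan_5)

lemma cnj_omega5_power: "cnj (omega5 ^ k) = omega5 ^ (4 * k)"
proof -
  have "omega5 * cnj omega5 = 1"
    unfolding omega5_def cis_cnj cis_mult by simp
  then have "cnj omega5 = omega5 ^ 4"
    using omega5_power_5 by algebra
  then show ?thesis
    by (simp add: power_mult)
qed

lemma omega5_add_power_4: "omega5 + omega5 ^ 4 = of_real ((sqrt 5 - 1) / 2)"
proof -
  define c where "c = 2 * Re omega5"
  have c: "omega5 + omega5 ^ 4 = of_real c"
    using complex_add_cnj[of omega5] cnj_omega5_power[of 1] by (simp add: c_def)
  have "of_real (c\<^sup>2 + c - 1) = (omega5 + omega5 ^ 4)\<^sup>2 + (omega5 + omega5 ^ 4) - (1::complex)"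
    by (simp add: c)
  also have "\<dots> = 0"
    using sum_omega5_power_1 omega5_power_5 by algebra
  finally have "c\<^sup>2 + c - 1 = 0"
    by (simp only: of_real_eq_0_iff)
  then have "(2 * c + 1)\<^sup>2 = 5"
    by algebra
  moreover have "cos (2 * pi / 5) > 0"
    by (rule cos_gt_zero_pi) (use pi_gt_zero in linarith)+
  then have "c > 0"
    by (simp add: c_def omega5_def)
  ultimately have "sqrt 5 = 2 * c + 1"
    by (intro real_sqrt_unique) simp_all
  then show ?thesis
    by (simp add: c)
qed

lemma omega5_power_2_add_power_3: "omega5 ^ 2 + omega5 ^ 3 = of_real (- (sqrt 5 + 1) / 2)"
proof -
  have "omega5 ^ 2 + omega5 ^ 3 = -1 - (omega5 + omega5 ^ 4)"
    using sum_omega5_power_1 by algebra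
  then show ?thesis
    by (simp add: omega5_add_power_4 field_simps)
qed

definition eval5 :: "complex \<Rightarrow> tc5 \<Rightarrow> complex" where
  "eval5 z u = (\<Sum>j<5. complex_of_real (xc5 u j) * z ^ j)"

lemma eval5_expand:
  "eval5 z u = of_real (u $ 0) + of_real (u $ 1) * z + of_real (u $ 2) * z ^ 2
     + of_real (u $ 3) * z ^ 3 + of_real (u $ 4) * z ^ 4"
  by (simp add: eval5_def xc5_def sum_lessThan_5)

lemma eval5_add: "eval5 z (u + v) = eval5 z u + eval5 z v"
  by (simp add: eval5_expand algebra_simps)

lemma eval5_diff: "eval5 z (u - v) = eval5 z u - eval5 z v"
  by (simp add: eval5_expand algebra_simps)

lemma eval5_scaleR: "eval5 z (a *\<^sub>R u) = of_real a * eval5 z u"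
  by (simp add: eval5_expand algebra_simps)

lemma eval5_cnj: "eval5 (cnj z) u = cnj (eval5 z u)"
  by (simp add: eval5_def)

lemma bounded_linear_eval5: "bounded_linear (eval5 z)"
proof -
  have "linear (eval5 z)"
  proof (rule linearI)
    show "eval5 z (r *\<^sub>R b) = r *\<^sub>R eval5 z b" for r b
      by (simp only: eval5_scaleR) (simp add: scaleR_conv_of_real)
  qed (rule eval5_add)
  then show ?thesis
    by (simp add: linear_conv_bounded_linear)
qed

lemma xc5_hc5: "i < 5 \<Longrightarrow> j < 5 \<Longrightarrow> xc5 (hc5 i) j = (if i = j then 1 else 0)"
  by (auto simp: hc5_def xc5_def less_Suc_eq numeral_eq_Suc)

lemma eval5_hc5:
  assumes "i < 5"
  shows "eval5 z (hc5 i) = z ^ i"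
proof -
  have "eval5 z (hc5 i) = (\<Sum>j<5. if i = j then z ^ j else 0)"
    unfolding eval5_def by (rule sum.cong) (simp_all add: xc5_hc5 assms)
  then show ?thesis
    using assms by simp
qed

lemma eval5_mult5:
  assumes "z ^ 5 = 1"
  shows "eval5 z (mult5 u v) = eval5 z u * eval5 z v"
proof -
  have components:
       "mult5 u v $ 0 = u$0 * v$0 + u$1 * v$4 + u$2 * v$3 + u$3 * v$2 + u$4 * v$1"
       "mult5 u v $ 1 = u$0 * v$1 + u$1 * v$0 + u$2 * v$4 + u$3 * v$3 + u$4 * v$2"
       "mult5 u v $ 2 = u$0 * v$2 + u$1 * v$1 + u$2 * v$0 + u$3 * v$4 + u$4 * v$3"
       "mult5 u v $ 3 = u$0 * v$3 + u$1 * v$2 + u$2 * v$1 + u$3 * v$0 + u$4 * v$4"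
       "mult5 u v $ 4 = u$0 * v$4 + u$1 * v$3 + u$2 * v$2 + u$3 * v$1 + u$4 * v$0"
    by (simp_all add: mult5_def sum_5 numerals_mod_5)
  have cyclic_convolution: "\<And>a0 a1 a2 a3 a4 b0 b1 b2 b3 b4 :: complex.
    (a0*b0 + a1*b4 + a2*b3 + a3*b2 + a4*b1) + (a0*b1 + a1*b0 + a2*b4 + a3*b3 + a4*b2) * z
     + (a0*b2 + a1*b1 + a2*b0 + a3*b4 + a4*b3) * z^2 + (a0*b3 + a1*b2 + a2*b1 + a3*b0 + a4*b4) * z^3
     + (a0*b4 + a1*b3 + a2*b2 + a3*b1 + a4*b0) * z^4
     = (a0 + a1*z + a2*z^2 + a3*z^3 + a4*z^4) * (b0 + b1*z + b2*z^2 + b3*z^3 + b4*z^4)"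
    using assms by algebra
  show ?thesis
    unfolding eval5_expand components of_real_add of_real_mult by (rule cyclic_convolution)
qed

lemma eval5_pow5: "z ^ 5 = 1 \<Longrightarrow> eval5 z (pow5 w n) = eval5 z w ^ n"
  by (induct n) (simp_all add: eval5_hc5 eval5_mult5)

lemma norm_mult5_le: "norm (mult5 u v) \<le> 25 * (norm u * norm v)"
proof -
  have component: "\<bar>mult5 u v $ k\<bar> \<le> 5 * (norm u * norm v)" for k
  proof -
    have "\<bar>mult5 u v $ k\<bar> \<le> (\<Sum>i\<in>UNIV. \<bar>u $ i * v $ (k - i)\<bar>)"
      unfolding mult5_def by (simp add: sum_abs)
    also have "\<dots> \<le> (\<Sum>i\<in>(UNIV::5 set). norm u * norm v)"
      by (rule sum_mono) (simp add: abs_mult mult_mono component_le_norm_cart)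
    finally show ?thesis by simp
  qed
  have "norm (mult5 u v) \<le> (\<Sum>k\<in>UNIV. \<bar>mult5 u v $ k\<bar>)"
    by (rule norm_le_l1_cart)
  also have "\<dots> \<le> (\<Sum>k\<in>(UNIV::5 set). 5 * (norm u * norm v))"
    by (rule sum_mono) (rule component)
  finally show ?thesis by simp
qed

lemma norm_pow5_le: "norm (pow5 w n) \<le> (25 * norm w) ^ n * norm (hc5 0)"
proof (induct n)
  case (Suc n)
  have "norm (pow5 w (Suc n)) \<le> 25 * (norm w * norm (pow5 w n))"
    using norm_mult5_le by simp
  also have "\<dots> \<le> 25 * (norm w * ((25 * norm w) ^ n * norm (hc5 0)))"
    using Suc by (simp add: mult_left_mono)
  finally show ?case by (simp add: algebra_simps)
qed simp

lemma summable_exp5: "summable (\<lambda>n. (1 / fact n) *\<^sub>R pow5 w n)"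
proof (rule summable_comparison_test')
  show "summable (\<lambda>n. ((25 * norm w) ^ n /\<^sub>R fact n) * norm (hc5 0))"
    by (rule summable_mult2) (rule summable_exp_generic)
  show "norm ((1 / fact n) *\<^sub>R pow5 w n) \<le> ((25 * norm w) ^ n /\<^sub>R fact n) * norm (hc5 0)" for n
    using mult_left_mono[OF norm_pow5_le, of "1 / fact n" w n] by (simp add: divide_simps)
qed

lemma eval5_exp5:
  assumes "z ^ 5 = 1"
  shows "eval5 z (exp5 w) = exp (eval5 z w)"
proof -
  have "eval5 z (exp5 w) = (\<Sum>n. eval5 z ((1 / fact n) *\<^sub>R pow5 w n))"
    unfolding exp5_def by (rule bounded_linear.suminf[OF bounded_linear_eval5 summable_exp5])
  also have "\<dots> = (\<Sum>n. eval5 z w ^ n /\<^sub>R fact n)"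
    by (simp only: eval5_scaleR eval5_pow5[OF assms]) (simp add: scaleR_conv_of_real divide_inverse)
  finally show ?thesis
    by (simp add: exp_def)
qed

lemma xc5_etilde: "j < 5 \<Longrightarrow> xc5 (etilde k) j = 2 / 5 * sin (2 * pi * real k * real j / 5)"
proof -
  assume "j < 5"
  then have "(\<Sum>i<5. sin (2 * pi * real k * real i / 5) * xc5 (hc5 i) j)
      = (\<Sum>i<5. if i = j then sin (2 * pi * real k * real i / 5) else 0)"
    by (intro sum.cong) (simp_all add: xc5_hc5)
  with \<open>j < 5\<close> show ?thesis
    by (simp add: etilde_def xc5_def)
qed

lemma eval5_etilde:
  "eval5 (omega5 ^ m) (etilde k) =
     ((if 5 dvd k + m then 5 else 0) - (if 5 dvd 4 * k + m then 5 else 0)) / (5 * \<i>)"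
proof -
  have sin: "of_real (sin (2 * pi * real k * real j / 5)) = ((omega5 ^ k) ^ j - (omega5 ^ (4 * k)) ^ j) / (2 * \<i>)"
    for j
  proof -
    have "(omega5 ^ (4 * k)) ^ j = cnj ((omega5 ^ k) ^ j)"
      by (simp only: complex_cnj_power [of "omega5 ^ k" j] cnj_omega5_power)
    then show ?thesis
      unfolding omega5_power_power cis_cnj by (simp add: complex_eq_iff)
  qed
  have "eval5 (omega5 ^ m) (etilde k)
      = (\<Sum>j<5. ((omega5 ^ (k + m)) ^ j - (omega5 ^ (4 * k + m)) ^ j) / (5 * \<i>))"
    unfolding eval5_def
  proof (rule sum.cong)
    fix j :: nat
    assume "j \<in> {..<5}"
    then have "of_real (xc5 (etilde k) j) = of_real (2 / 5) * of_real (sin (2 * pi * real k * real j / 5))"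
      by (simp only: lessThan_iff xc5_etilde of_real_mult)
    also have "\<dots> = ((omega5 ^ k) ^ j - (omega5 ^ (4 * k)) ^ j) / (5 * \<i>)"
      unfolding sin by simp
    finally show "of_real (xc5 (etilde k) j) * (omega5 ^ m) ^ j
        = ((omega5 ^ (k + m)) ^ j - (omega5 ^ (4 * k + m)) ^ j) / (5 * \<i>)"
      by (simp only: power_add power_mult_distrib left_diff_distrib times_divide_eq_left)
  qed simp
  also have "\<dots> = ((\<Sum>j<5. (omega5 ^ (k + m)) ^ j) - (\<Sum>j<5. (omega5 ^ (4 * k + m)) ^ j)) / (5 * \<i>)"
    by (simp only: sum_subtractf [symmetric] sum_divide_distrib)
  finally show ?thesis
    by (simp only: sum_omega5_powers)
qed

lemma eval5_inversion:
  assumes "j < 5"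
  shows "(\<Sum>k<5. (omega5 ^ k) ^ (5 - j) * eval5 (omega5 ^ k) u) = 5 * of_real (xc5 u j)"
proof -
  have power: "(omega5 ^ k) ^ (5 - j) * (omega5 ^ k) ^ i = (omega5 ^ (5 - j + i)) ^ k" for k i
    by (simp only: power_add [symmetric] power_mult [symmetric]) (simp add: distrib_left ac_simps)
  have "(\<Sum>k<5. (omega5 ^ k) ^ (5 - j) * eval5 (omega5 ^ k) u)
      = (\<Sum>k<5. \<Sum>i<5. of_real (xc5 u i) * (omega5 ^ (5 - j + i)) ^ k)"
    unfolding eval5_def sum_distrib_left by (intro sum.cong refl) (metis power mult.left_commute)
  also have "\<dots> = (\<Sum>i<5. of_real (xc5 u i) * (\<Sum>k<5. (omega5 ^ (5 - j + i)) ^ k))"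
    unfolding sum_distrib_left by (rule sum.swap)
  also have "\<dots> = (\<Sum>i<5. if i = j then 5 * of_real (xc5 u i) else 0)"
  proof (rule sum.cong)
    fix i :: nat
    assume "i \<in> {..<5}"
    with assms have "5 dvd (5 - j + i) \<longleftrightarrow> i = j"
      by auto presburger+
    then show "of_real (xc5 u i) * (\<Sum>k<5. (omega5 ^ (5 - j + i)) ^ k)
        = (if i = j then 5 * of_real (xc5 u i) else 0)"
      by (simp add: sum_omega5_powers)
  qed simp
  finally show ?thesis
    using assms by simp
qed

lemma tc5_eq_by_eval5_roots:
  assumes "\<And>k. k < 5 \<Longrightarrow> eval5 (omega5 ^ k) u = eval5 (omega5 ^ k) v"
  shows "u = v"
proof (rule tc5_eqI)
  fix j :: nat
  assume "j < 5"
  then have "5 * complex_of_real (xc5 u j) = 5 * of_real (xc5 v j)"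
    using assms by (simp flip: eval5_inversion)
  then show "xc5 u j = xc5 v j"
    by simp
qed

lemma tc5_eq_by_eval5_1_omega5_omega5_2:
  assumes "eval5 1 u = eval5 1 v" "eval5 omega5 u = eval5 omega5 v"
    and "eval5 (omega5 ^ 2) u = eval5 (omega5 ^ 2) v"
  shows "u = v"
proof (rule tc5_eq_by_eval5_roots)
  have "cnj omega5 = omega5 ^ 4" "cnj (omega5 ^ 2) = omega5 ^ 3"
    using cnj_omega5_power[of 1] cnj_omega5_power[of 2] omega5_power_mod[of 8] by simp_all
  then have conj: "eval5 (omega5 ^ 4) w = cnj (eval5 omega5 w)"
    "eval5 (omega5 ^ 3) w = cnj (eval5 (omega5 ^ 2) w)" for w
    by (metis eval5_cnj)+
  show "eval5 (omega5 ^ k) u = eval5 (omega5 ^ k) v" if "k < 5" for k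
  proof -
    from that have "k = 0 \<or> k = 1 \<or> k = 2 \<or> k = 3 \<or> k = 4"
      by auto
    then show ?thesis
      using assms conj by auto
  qed
qed

lemma eval5_etilde_1:
  "eval5 1 (etilde 1) = 0" "eval5 omega5 (etilde 1) = \<i>" "eval5 (omega5 ^ 2) (etilde 1) = 0"
  using eval5_etilde[of 0 1] eval5_etilde[of 1 1] eval5_etilde[of 2 1]
  \<comment> \<open>the simplifier turns \<open>1 + n\<close> into \<open>Suc n\<close>, which \<open>5 dvd _\<close> does not evaluate\<close>
  by (simp_all add: numeral_2_eq_2 [symmetric] numeral_3_eq_3 [symmetric])

lemma eval5_etilde_2:
  "eval5 1 (etilde 2) = 0" "eval5 omega5 (etilde 2) = 0" "eval5 (omega5 ^ 2) (etilde 2) = \<i>"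
  using eval5_etilde[of 0 2] eval5_etilde[of 1 2] eval5_etilde[of 2 2]
  by simp_all

text \<open>The exponent of the theorem, with \<open>L = ln (sqrt 2 / tan theta)\<close> and \<open>M = ln (tan psi)\<close>.\<close>

definition polar_exponent :: "real \<Rightarrow> real \<Rightarrow> real \<Rightarrow> real \<Rightarrow> tc5" where
  "polar_exponent L M p1 p2 =
     (L / 5) *\<^sub>R (hc5 1 + hc5 2 + hc5 3 + hc5 4)
     + M *\<^sub>R (((sqrt 5 + 1) / 10) *\<^sub>R (hc5 1 + hc5 4) - ((sqrt 5 - 1) / 10) *\<^sub>R (hc5 2 + hc5 3))
     + p1 *\<^sub>R etilde 1 + p2 *\<^sub>R etilde 2"

lemma eval5_polar_exponent:
  assumes "z + z ^ 4 = of_real s" "z ^ 2 + z ^ 3 = of_real t"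
  shows "eval5 z (polar_exponent L M p1 p2) =
     of_real (L / 5 * (s + t) + M * ((sqrt 5 + 1) / 10 * s - (sqrt 5 - 1) / 10 * t))
     + of_real p1 * eval5 z (etilde 1) + of_real p2 * eval5 z (etilde 2)"
proof -
  have hc5: "eval5 z (hc5 1) = z" "eval5 z (hc5 2) = z ^ 2" "eval5 z (hc5 3) = z ^ 3"
    "eval5 z (hc5 4) = z ^ 4"
    by (simp_all add: eval5_hc5)
  have "z + z ^ 2 + z ^ 3 + z ^ 4 = of_real (s + t)"
    using assms by (simp add: algebra_simps)
  with assms show ?thesis
    by (simp only: polar_exponent_def eval5_add eval5_diff eval5_scaleR hc5
        of_real_add of_real_diff of_real_mult)
qed

lemma eval5_1_polar_exponent:
  "eval5 1 (polar_exponent L M p1 p2) = of_real (4 / 5 * L + 2 / 5 * M)"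
proof -
  have "eval5 1 (polar_exponent L M p1 p2) =
      of_real (L / 5 * (2 + 2) + M * ((sqrt 5 + 1) / 10 * 2 - (sqrt 5 - 1) / 10 * 2))"
    using eval5_polar_exponent[of 1 2 2 L M p1 p2]
    unfolding eval5_etilde_1 eval5_etilde_2 by simp
  also have "L / 5 * (2 + 2) + M * ((sqrt 5 + 1) / 10 * 2 - (sqrt 5 - 1) / 10 * 2) = 4 / 5 * L + 2 / 5 * M"
    by (simp add: field_simps)
  finally show ?thesis .
qed

lemma eval5_omega5_polar_exponent:
  "eval5 omega5 (polar_exponent L M p1 p2) = Complex (2 / 5 * M - L / 5) p1"
proof -
  let ?s = "(sqrt 5 - 1) / 2" and ?t = "- (sqrt 5 + 1) / 2"
  have "eval5 omega5 (polar_exponent L M p1 p2) =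
      of_real (L / 5 * (?s + ?t) + M * ((sqrt 5 + 1) / 10 * ?s - (sqrt 5 - 1) / 10 * ?t)) + of_real p1 * \<i>"
    using eval5_polar_exponent[OF omega5_add_power_4 omega5_power_2_add_power_3, of L M p1 p2]
    unfolding eval5_etilde_1 eval5_etilde_2 by simp
  also have "L / 5 * (?s + ?t) + M * ((sqrt 5 + 1) / 10 * ?s - (sqrt 5 - 1) / 10 * ?t) = 2 / 5 * M - L / 5"
    by (simp add: field_simps)
  finally show ?thesis
    by (simp add: complex_eq_iff)
qed

lemma eval5_omega5_power_2_polar_exponent:
  "eval5 (omega5 ^ 2) (polar_exponent L M p1 p2) = Complex (- 3 / 5 * M - L / 5) p2"
proof -
  let ?s = "- (sqrt 5 + 1) / 2" and ?t = "(sqrt 5 - 1) / 2"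
  have "(omega5 ^ 2) ^ 4 = omega5 ^ 3" "(omega5 ^ 2) ^ 2 = omega5 ^ 4" "(omega5 ^ 2) ^ 3 = omega5"
    using omega5_power_mod[of 8] omega5_power_mod[of 6] by (simp_all flip: power_mult)
  then have "omega5 ^ 2 + (omega5 ^ 2) ^ 4 = of_real ?s" "(omega5 ^ 2) ^ 2 + (omega5 ^ 2) ^ 3 = of_real ?t"
    using omega5_power_2_add_power_3 omega5_add_power_4 by (simp_all add: add.commute)
  then have "eval5 (omega5 ^ 2) (polar_exponent L M p1 p2) =
      of_real (L / 5 * (?s + ?t) + M * ((sqrt 5 + 1) / 10 * ?s - (sqrt 5 - 1) / 10 * ?t)) + of_real p2 * \<i>"
    using eval5_polar_exponent[of "omega5 ^ 2" ?s ?t L M p1 p2]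
    unfolding eval5_etilde_1 eval5_etilde_2 by simp
  also have "L / 5 * (?s + ?t) + M * ((sqrt 5 + 1) / 10 * ?s - (sqrt 5 - 1) / 10 * ?t) = - 3 / 5 * M - L / 5"
    by (simp add: field_simps)
  finally show ?thesis
    by (simp add: complex_eq_iff)
qed

lemma mult_exp_eq_if_ln_eq:
  fixes a r x :: real
  assumes "a > 0" "r > 0" "ln a + x = ln r"
  shows "a * exp x = r"
  using assms by (metis exp_add exp_ln)

lemma scaled_exp_Complex:
  fixes a r x p :: real
  assumes "a > 0" "r > 0" "ln a + x = ln r"
  shows "of_real a * exp (Complex x p) = of_real r * cis p"
  using mult_exp_eq_if_ln_eq[OF assms] by (simp add: exp_eq_polar flip: of_real_mult)

lemma tc5_polar_form:
  assumes "A > 0" "r1 > 0" "r2 > 0"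
    and "eval5 1 u = of_real A"
    and "eval5 omega5 u = of_real r1 * cis p1"
    and "eval5 (omega5 ^ 2) u = of_real r2 * cis p2"
  shows "u = root 5 (A * r1\<^sup>2 * r2\<^sup>2) *\<^sub>R exp5 (polar_exponent (ln A - ln r1) (ln r1 - ln r2) p1 p2)"
proof -
  define a where "a = root 5 (A * r1\<^sup>2 * r2\<^sup>2)"
  define W where "W = polar_exponent (ln A - ln r1) (ln r1 - ln r2) p1 p2"
  have a_pos: "a > 0"
    using assms by (simp add: a_def)
  have ln_a: "ln a = (ln A + 2 * ln r1 + 2 * ln r2) / 5"
    using assms by (simp add: a_def ln_root ln_mult ln_realpow)
  have eval: "eval5 z (a *\<^sub>R exp5 W) = of_real a * exp (eval5 z W)" if "z ^ 5 = 1" for z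
    by (simp add: eval5_scaleR eval5_exp5 that)
  have "a * exp (4 / 5 * (ln A - ln r1) + 2 / 5 * (ln r1 - ln r2)) = A"
    using assms a_pos by (intro mult_exp_eq_if_ln_eq) (simp_all add: ln_a field_simps)
  then have "eval5 1 u = eval5 1 (a *\<^sub>R exp5 W)"
    unfolding eval[OF power_one] unfolding W_def eval5_1_polar_exponent assms(4) exp_of_real
    by (simp flip: of_real_mult)
  moreover have "eval5 omega5 u = eval5 omega5 (a *\<^sub>R exp5 W)"
    unfolding eval[OF omega5_power_5] unfolding W_def eval5_omega5_polar_exponent assms(5)
    using assms a_pos by (intro scaled_exp_Complex [symmetric]) (simp_all add: ln_a field_simps)
  moreover have "eval5 (omega5 ^ 2) u = eval5 (omega5 ^ 2) (a *\<^sub>R exp5 W)"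
    unfolding eval[OF omega5_power_power_5] unfolding W_def eval5_omega5_power_2_polar_exponent assms(6)
    using assms a_pos by (intro scaled_exp_Complex [symmetric]) (simp_all add: ln_a field_simps)
  ultimately have "u = a *\<^sub>R exp5 W"
    by (rule tc5_eq_by_eval5_1_omega5_omega5_2)
  then show ?thesis
    by (simp only: a_def W_def)
qed

lemma eval5_1: "eval5 1 u = of_real (vplus u)"
  by (simp add: eval5_def vplus_def)

lemma eval5_omega5_power: "eval5 (omega5 ^ k) u = Complex (vk k u) (vtk k u)"
  by (simp add: complex_eq_iff eval5_def vk_def vtk_def Re_sum Im_sum omega5_power_power)

lemma eval5_omega5_power_polar:
  assumes "rhok k u > 0" "cos phi = vk k u / rhok k u" "sin phi = vtk k u / rhok k u"
  shows "eval5 (omega5 ^ k) u = of_real (rhok k u) * cis phi"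
  using assms by (simp add: eval5_omega5_power complex_eq_iff)

theorem mainTheorem6:
  fixes u :: tc5 and theta psi phi1 phi2 :: real
  assumes theta: "0 < theta" "theta < pi/2" "tan theta = sqrt 2 * rhok 1 u / vplus u"
      and psi: "0 < psi" "psi < pi/2" "tan psi = rhok 1 u / rhok 2 u"
      and phi1: "0 \<le> phi1" "phi1 < 2*pi" "cos phi1 = vk 1 u / rhok 1 u" "sin phi1 = vtk 1 u / rhok 1 u"
      and phi2: "0 \<le> phi2" "phi2 < 2*pi" "cos phi2 = vk 2 u / rhok 2 u" "sin phi2 = vtk 2 u / rhok 2 u"
  shows "u = amp5 u *\<^sub>R exp5
           ( (ln (sqrt 2 / tan theta) / 5) *\<^sub>R (hc5 1 + hc5 2 + hc5 3 + hc5 4)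
           + ln (tan psi) *\<^sub>R ( ((sqrt 5 + 1) / 10) *\<^sub>R (hc5 1 + hc5 4)
                                 - ((sqrt 5 - 1) / 10) *\<^sub>R (hc5 2 + hc5 3))
           + phi1 *\<^sub>R etilde 1 + phi2 *\<^sub>R etilde 2)"
proof -
  have tan_pos: "tan theta > 0" "tan psi > 0"
    using theta(1,2) psi(1,2) by (simp_all add: tan_gt_zero)
  have "rhok 1 u \<ge> 0" "rhok 2 u \<ge> 0"
    by (simp_all add: rhok_def)
  then have r1: "rhok 1 u > 0" and A: "vplus u > 0" and r2: "rhok 2 u > 0"
    using tan_pos theta(3) psi(3) by (auto simp: zero_less_divide_iff mult_less_0_iff)
  have "eval5 omega5 u = of_real (rhok 1 u) * cis phi1"
    using eval5_omega5_power_polar[of 1 u phi1] r1 phi1(3,4) by simp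
  moreover have "eval5 (omega5 ^ 2) u = of_real (rhok 2 u) * cis phi2"
    using eval5_omega5_power_polar[of 2 u phi2] r2 phi2(3,4) by simp
  ultimately have polar: "u = amp5 u *\<^sub>R exp5 (polar_exponent (ln (vplus u) - ln (rhok 1 u))
      (ln (rhok 1 u) - ln (rhok 2 u)) phi1 phi2)"
    unfolding amp5_def using A r1 r2 eval5_1 by (intro tc5_polar_form)
  have "ln (sqrt 2 / tan theta) = ln (vplus u) - ln (rhok 1 u)"
    using r1 A by (simp add: theta(3) ln_div)
  moreover have "ln (tan psi) = ln (rhok 1 u) - ln (rhok 2 u)"
    using r1 r2 by (simp add: psi(3) ln_div)
  ultimately show ?thesis
    using polar by (simp only: polar_exponent_def)
qed

end
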